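(* Let $n\ge p\ge1$, $\lambda>0$, $0<\varepsilon<\frac34$, and let $f:\mathbb{R}^{n\times p}\to\mathbb{R}$ be twice continuously differentiable. Let $\mathrm{St}(p,n)^\varepsilon=\{X:\|X^\top X-I_p\|\le\varepsilon\}$, let $L>0$ be such that $\nabla f$ is $L$-Lipschitz on $\mathrm{St}(p,n)^\varepsilon$, $L'=\max_{X\in\mathrm{St}(p,n)^\varepsilon}\|\nabla f(X)\|$, $\hat L=\max(L,L')$, $s=\sup_{X\in\mathrm{St}(p,n)^\varepsilon}\|\mathrm{sym}(X^\top\nabla f(X))\|$, let $\mu\ge\frac{2}{3-4\varepsilon}\left(L(1-\varepsilon)+3s+\hat L^2\frac{(1+\varepsilon)^2}{\lambda(1-\varepsilon)}\right)$, $\nu=\lambda\mu$, and $\mathcal{L}(X)=f(X)-\frac12\langle\mathrm{sym}(X^\top\nabla f(X)),X^\top X-I_p\rangle+\mu\mathcal{N}(X)$. Let $\rho=\min\left(\frac12,\frac{\nu}{4\lambda^2(1+\varepsilon)}\right)$. Then for all $X\in\mathrm{St}(p,n)^\varepsilon$, $$\langle\Lambda(X),\nabla\mathcal{L}(X)\rangle\ge\rho\|\Lambda(X)\|^2.$$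
   Context: $\|\cdot\|$ and $\langle\cdot,\cdot\rangle$ are the Frobenius norm and inner product. $\mathrm{sym}(M)=\frac12(M+M^\top)$, $\mathrm{skew}(M)=\frac12(M-M^\top)$. $\mathcal{N}(X)=\frac14\|X^\top X-I_p\|^2$. $\mathrm{grad}f(X)=\mathrm{skew}(\nabla f(X)X^\top)X$ for all $X$, and $\Lambda(X)=\mathrm{grad}f(X)+\lambda X(X^\top X-I_p)$. *)

theory Defs
  imports "HOL-Analysis.Analysis"
begin

text \<open>Matrices in R^(n x p) are represented as real^'p^'n (rows indexed by 'n).
  The inner product and norm on this type are the Frobenius ones.\<close>

definition msym :: "real^'k^'k \<Rightarrow> real^'k^'k" where
  "msym M = (1/2) *\<^sub>R (M + transpose M)"

definition mskew :: "real^'k^'k \<Rightarrow> real^'k^'k" where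
  "mskew M = (1/2) *\<^sub>R (M - transpose M)"

definition Nfun :: "real^'p^'n \<Rightarrow> real" where
  "Nfun X = (1/4) * (norm (transpose X ** X - mat 1))\<^sup>2"

definition stiefel_eps :: "real \<Rightarrow> (real^'p^'n) set" where
  "stiefel_eps eps = {X. norm (transpose X ** X - mat 1) \<le> eps}"

definition rgrad :: "(real^'p^'n \<Rightarrow> real^'p^'n) \<Rightarrow> real^'p^'n \<Rightarrow> real^'p^'n" where
  "rgrad gradf X = mskew (gradf X ** transpose X) ** X"

definition Lambda :: "(real^'p^'n \<Rightarrow> real^'p^'n) \<Rightarrow> real \<Rightarrow> real^'p^'n \<Rightarrow> real^'p^'n" where
  "Lambda gradf lam X = rgrad gradf X + lam *\<^sub>R (X ** (transpose X ** X - mat 1))"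

definition meritL :: "(real^'p^'n \<Rightarrow> real) \<Rightarrow> (real^'p^'n \<Rightarrow> real^'p^'n) \<Rightarrow> real \<Rightarrow> real^'p^'n \<Rightarrow> real" where
  "meritL f gradf mu X = f X - (1/2) * inner (msym (transpose X ** gradf X)) (transpose X ** X - mat 1)
      + mu * Nfun X"

end

(*
  Write D = X^T X - I, A = skew(grad f(X) X^T) and N = X D, so that Lambda(X) = A X + lam N, and
  A X is orthogonal to N because X^T A X is skew while D is symmetric.  Differentiating the merit
  function and evaluating along Lambda gives the identity
    <grad L, Lambda> = |A|^2 - 1/2 <grad f, A X D> - 3/2 lam <S, D^2> - 1/2 <Hess f[Lambda], N>
                       + mu lam |N|^2,        S = sym(X^T grad f(X)).
  Moving from X along -Lambda shrinks |X^T X - I| to first order, so X - t Lambda stays in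
  St(p,n)^eps for small t > 0 and the Lipschitz bound on grad f gives |Hess f[Lambda]| <= L |Lambda|.
  Together with |A X|^2 <= (1 + eps) |A|^2, (1 - eps) |D|^2 <= |N|^2, Young's inequality and the
  choice of mu this yields <grad L, Lambda> >= |A X|^2 / 2 + lam mu / 4 |N|^2 >= rho |Lambda|^2.
*)

theory Submission
  imports Defs
begin

lemma norm_matrix_sq: "(norm (A::real^'n^'m))\<^sup>2 = (\<Sum>i\<in>UNIV. \<Sum>j\<in>UNIV. (A$i$j)\<^sup>2)"
  by (simp add: norm_vec_def L2_set_def sum_nonneg)

lemma norm_rows_sq: "(norm (A::real^'n^'m))\<^sup>2 = (\<Sum>i\<in>UNIV. (norm (A$i))\<^sup>2)"
  by (simp add: norm_vec_def L2_set_def sum_nonneg)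

lemma inner_matrix: "inner (A::real^'n^'m) B = (\<Sum>i\<in>UNIV. \<Sum>j\<in>UNIV. A$i$j * B$i$j)"
  by (simp add: inner_vec_def)

lemma inner_transpose: "inner (transpose (A::real^'n^'m)) (transpose B) = inner A B"
  by (simp only: inner_matrix transpose_def vec_lambda_beta) (rule sum.swap)

lemma norm_transpose: "norm (transpose (A::real^'n^'m)) = norm A"
  by (simp add: norm_eq_sqrt_inner inner_transpose)

lemma inner_matrix_mult_left:
  "inner ((A::real^'n^'m) ** (B::real^'p^'n)) C = inner B (transpose A ** C)"
proof -
  have "inner (A ** B) C = (\<Sum>i\<in>UNIV. \<Sum>k\<in>UNIV. \<Sum>j\<in>UNIV. A$i$j * B$j$k * C$i$k)"
    by (simp add: inner_matrix matrix_matrix_mult_def sum_distrib_right)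
  also have "\<dots> = (\<Sum>i\<in>UNIV. \<Sum>j\<in>UNIV. \<Sum>k\<in>UNIV. A$i$j * B$j$k * C$i$k)"
    by (rule sum.cong[OF refl], rule sum.swap)
  also have "\<dots> = (\<Sum>j\<in>UNIV. \<Sum>k\<in>UNIV. \<Sum>i\<in>UNIV. A$i$j * B$j$k * C$i$k)"
    by (subst sum.swap) (rule sum.cong[OF refl], rule sum.swap)
  also have "\<dots> = (\<Sum>j\<in>UNIV. \<Sum>k\<in>UNIV. B$j$k * (\<Sum>i\<in>UNIV. A$i$j * C$i$k))"
    by (simp only: sum_distrib_left mult_ac)
  also have "\<dots> = inner B (transpose A ** C)"
    by (simp add: inner_matrix matrix_matrix_mult_def transpose_def)
  finally show ?thesis .
qed

lemma inner_matrix_mult_right: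
  "inner ((A::real^'n^'m) ** (B::real^'p^'n)) C = inner A (C ** transpose B)"
proof -
  have "inner (A ** B) C = inner (transpose B ** transpose A) (transpose C)"
    by (simp add: inner_transpose flip: matrix_transpose_mul)
  also have "\<dots> = inner (transpose A) (B ** transpose C)"
    by (simp add: inner_matrix_mult_left)
  also have "\<dots> = inner (transpose A) (transpose (C ** transpose B))"
    by (simp add: matrix_transpose_mul)
  also have "\<dots> = inner A (C ** transpose B)"
    by (rule inner_transpose)
  finally show ?thesis .
qed

lemma norm_matrix_mult_le: "norm ((A::real^'n^'m) ** (B::real^'p^'n)) \<le> norm A * norm B"
proof -
  have entry: "((A ** B)$i$k)\<^sup>2 \<le> (norm (A$i))\<^sup>2 * (norm (column k B))\<^sup>2" for i k
  proof -
    have "(A ** B)$i$k = inner (A$i) (column k B)"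
      by (simp add: matrix_matrix_mult_def inner_vec_def column_def)
    then show ?thesis
      using Cauchy_Schwarz_ineq[of "A$i" "column k B"] by (simp add: power2_norm_eq_inner)
  qed
  have columns: "(\<Sum>k\<in>UNIV. (norm (column k B))\<^sup>2) = (norm B)\<^sup>2"
    unfolding norm_matrix_sq[of B] by (simp add: norm_vec_def L2_set_def sum_nonneg column_def)
      (rule sum.swap)
  have "(norm (A ** B))\<^sup>2 \<le> (\<Sum>i\<in>UNIV. \<Sum>k\<in>UNIV. (norm (A$i))\<^sup>2 * (norm (column k B))\<^sup>2)"
    unfolding norm_matrix_sq[of "A ** B"] by (intro sum_mono entry)
  also have "\<dots> = (\<Sum>i\<in>UNIV. (norm (A$i))\<^sup>2) * (\<Sum>k\<in>UNIV. (norm (column k B))\<^sup>2)"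
    by (simp only: sum_product)
  also have "\<dots> = (norm A * norm B)\<^sup>2"
    by (simp only: columns power_mult_distrib norm_rows_sq)
  finally show ?thesis
    by (rule power2_le_imp_le) simp
qed

lemma matrix_add_rdistrib: "((A::real^'n^'m) + B) ** (C::real^'p^'n) = A ** C + B ** C"
  by (vector matrix_matrix_mult_def sum.distrib[symmetric] field_simps)

lemma matrix_diff_rdistrib: "((A::real^'n^'m) - B) ** (C::real^'p^'n) = A ** C - B ** C"
  by (vector matrix_matrix_mult_def sum_subtractf[symmetric] field_simps)

lemma matrix_diff_ldistrib: "(A::real^'n^'m) ** ((B::real^'p^'n) - C) = A ** B - A ** C"
  by (vector matrix_matrix_mult_def sum_subtractf[symmetric] field_simps)

lemma matrix_mult_neg_left: "(- (A::real^'n^'m)) ** (B::real^'p^'n) = - (A ** B)"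
  using scalar_matrix_assoc[of "-1" A B] by simp

lemma matrix_mult_neg_right: "(A::real^'n^'m) ** (- (B::real^'p^'n)) = - (A ** B)"
  using matrix_scalar_ac[of A "-1" B] by (simp add: matrix_mult_neg_left)

lemma transpose_add: "transpose ((A::real^'n^'m) + B) = transpose A + transpose B"
  by (vector transpose_def)

lemma transpose_diff: "transpose ((A::real^'n^'m) - B) = transpose A - transpose B"
  by (vector transpose_def)

lemma bounded_bilinear_matrix_mult:
  "bounded_bilinear ((**) :: real^'n^'m \<Rightarrow> real^'p^'n \<Rightarrow> real^'p^'m)"
  by (rule bounded_bilinear.intro)
    (auto simp: matrix_add_rdistrib matrix_add_ldistrib scalar_matrix_assoc matrix_scalar_ac
      intro!: exI[of _ 1] norm_matrix_mult_le)

lemma bounded_linear_transpose: "bounded_linear (transpose :: real^'n^'m \<Rightarrow> real^'m^'n)"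
  by (rule bounded_linear_intro[where K=1]) (simp_all add: transpose_add transpose_scalar norm_transpose)

lemma transpose_msym: "transpose (msym M) = msym (M::real^'k^'k)"
  by (simp add: msym_def transpose_scalar transpose_add add.commute)

lemma transpose_mskew: "transpose (mskew M) = - mskew (M::real^'k^'k)"
  by (simp add: mskew_def transpose_scalar transpose_diff algebra_simps)

lemma msym_add_mskew: "msym M + mskew M = (M::real^'k^'k)"
  by (simp add: vec_eq_iff msym_def mskew_def transpose_def field_simps)

lemma bounded_linear_msym: "bounded_linear (msym :: real^'k^'k \<Rightarrow> real^'k^'k)"
proof (rule bounded_linear_intro[where K=1])
  fix M :: "real^'k^'k"
  have "norm (M + transpose M) \<le> 2 * norm M"
    using norm_triangle_ineq[of M "transpose M"] by (simp add: norm_transpose)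
  then show "norm (msym M) \<le> norm M * 1"
    by (simp add: msym_def)
qed (simp_all add: msym_def transpose_add transpose_scalar algebra_simps)

lemma inner_transpose_symmetric:
  "transpose S = S \<Longrightarrow> inner (transpose M) S = inner M (S::real^'k^'k)"
  by (metis inner_transpose)

lemma inner_symmetric_skew:
  assumes "transpose S = S" "transpose K = - K"
  shows "inner S (K::real^'k^'k) = 0"
  using inner_transpose[of S K] assms by simp

lemma inner_msym_symmetric:
  "transpose S = S \<Longrightarrow> inner (msym M) S = inner M (S::real^'k^'k)"
  by (simp add: msym_def inner_add_left inner_transpose_symmetric)

lemma inner_mskew_self: "inner (mskew M) M = (norm (mskew (M::real^'k^'k)))\<^sup>2"
proof -
  have "inner (mskew M) (msym M) = 0"
    by (metis inner_commute inner_symmetric_skew transpose_msym transpose_mskew)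
  then have "inner (mskew M) (msym M + mskew M) = inner (mskew M) (mskew M)"
    by (simp add: inner_add_right)
  then show ?thesis
    by (simp add: msym_add_mskew power2_norm_eq_inner)
qed

lemma transpose_congruence_skew:
  assumes "transpose K = - K"
  shows "transpose (transpose (X::real^'p^'n) ** (K::real^'n^'n) ** X) = - (transpose X ** K ** X)"
  using assms by (simp add: matrix_transpose_mul matrix_mul_assoc matrix_mult_neg_left matrix_mult_neg_right)

lemma symmetric_gram_minus_id: "transpose (transpose (X::real^'p^'n) ** X - mat 1) = transpose X ** X - mat 1"
  by (simp add: transpose_diff matrix_transpose_mul)

lemma inner_symmetric_transpose_mult:
  assumes "transpose S = S"
  shows "inner S (transpose V ** (X::real^'p^'n)) = inner S (transpose X ** V)"
  by (metis assms inner_commute inner_transpose_symmetric matrix_transpose_mul transpose_transpose)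

lemma has_derivative_meritL:
  fixes f :: "real^'p^'n \<Rightarrow> real" and gradf :: "real^'p^'n \<Rightarrow> real^'p^'n"
  assumes f: "(f has_derivative (\<lambda>V. inner (gradf X) V)) (at X)"
    and gradf: "(gradf has_derivative H) (at X)"
  shows "(meritL f gradf mu has_derivative (\<lambda>V.
            inner (gradf X) V - inner (msym (transpose X ** gradf X)) (transpose X ** V)
            - 1/2 * inner (transpose X ** H V + transpose V ** gradf X) (transpose X ** X - mat 1)
            + mu * inner (transpose X ** X - mat 1) (transpose X ** V))) (at X)"
proof -
  define D where "D Y = transpose Y ** Y - mat 1" for Y :: "real^'p^'n"
  define S where "S Y = msym (transpose Y ** gradf Y)" for Y
  have sym_D: "transpose (D X) = D X" and sym_S: "transpose (S X) = S X"
    unfolding D_def S_def by (rule symmetric_gram_minus_id transpose_msym)+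
  have dT: "(transpose has_derivative transpose) (at X)"
    by (rule bounded_linear.has_derivative[OF bounded_linear_transpose has_derivative_ident])
  have dD: "(D has_derivative (\<lambda>V. transpose X ** V + transpose V ** X)) (at X)"
    unfolding D_def
    by (rule has_derivative_eq_rhs[OF has_derivative_diff[OF
          bounded_bilinear.FDERIV[OF bounded_bilinear_matrix_mult dT has_derivative_ident]
          has_derivative_const]]) simp
  have dS: "(S has_derivative (\<lambda>V. msym (transpose X ** H V + transpose V ** gradf X))) (at X)"
    unfolding S_def
    by (rule bounded_linear.has_derivative[OF bounded_linear_msym
          bounded_bilinear.FDERIV[OF bounded_bilinear_matrix_mult dT gradf]])
  have merit: "meritL f gradf mu = (\<lambda>Y. f Y - 1/2 * inner (S Y) (D Y) + mu/4 * inner (D Y) (D Y))"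
    by (simp add: fun_eq_iff meritL_def Nfun_def S_def D_def power2_norm_eq_inner)
  have "(meritL f gradf mu has_derivative (\<lambda>V.
          inner (gradf X) V
          - 1/2 * (inner (S X) (transpose X ** V + transpose V ** X)
                   + inner (msym (transpose X ** H V + transpose V ** gradf X)) (D X))
          + mu/4 * (inner (D X) (transpose X ** V + transpose V ** X)
                    + inner (transpose X ** V + transpose V ** X) (D X)))) (at X)"
    unfolding merit
    by (intro has_derivative_add has_derivative_diff f has_derivative_mult_right
          has_derivative_inner dS dD)
  moreover have "inner (S X) (transpose X ** V + transpose V ** X) = 2 * inner (S X) (transpose X ** V)"
    and "inner (D X) (transpose X ** V + transpose V ** X) = 2 * inner (D X) (transpose X ** V)"
    and "inner (transpose X ** V + transpose V ** X) (D X) = 2 * inner (D X) (transpose X ** V)"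
    for V
    by (simp_all add: inner_add_left inner_add_right inner_commute[of _ "D X"]
        inner_symmetric_transpose_mult[OF sym_S] inner_symmetric_transpose_mult[OF sym_D])
  moreover have "inner (msym M) (D X) = inner M (D X)" for M
    by (rule inner_msym_symmetric[OF sym_D])
  ultimately show ?thesis
    unfolding D_def[symmetric] S_def[symmetric]
    by (elim has_derivative_eq_rhs) (simp add: fun_eq_iff algebra_simps)
qed

lemma transpose_mult_normal_part:
  "transpose X ** (X ** (transpose X ** X - mat 1))
     = (transpose X ** X - mat 1) ** (transpose X ** X - mat 1) + (transpose (X::real^'p^'n) ** X - mat 1)"
proof -
  have "transpose X ** X = (transpose X ** X - mat 1) + mat 1"
    by simp
  then show ?thesis
    by (metis matrix_add_rdistrib matrix_mul_assoc matrix_mul_lid)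
qed

lemma inner_gradient_meritL_Lambda_eq:
  fixes f :: "real^'p^'n \<Rightarrow> real" and gradf :: "real^'p^'n \<Rightarrow> real^'p^'n"
  assumes f: "(f has_derivative (\<lambda>V. inner (gradf X) V)) (at X)"
    and gradf: "(gradf has_derivative H) (at X)"
    and gradL: "(meritL f gradf mu has_derivative (\<lambda>V. inner gL V)) (at X)"
  defines "G \<equiv> gradf X" and "D \<equiv> transpose X ** X - mat 1"
  defines "S \<equiv> msym (transpose X ** G)" and "A \<equiv> mskew (G ** transpose X)" and "N \<equiv> X ** D"
  shows "inner gL (Lambda gradf lam X)
           = (norm A)\<^sup>2 - 1/2 * inner G (A ** X ** D) - 3/2 * lam * inner S (D ** D)
             - 1/2 * inner (H (Lambda gradf lam X)) N + mu * lam * (norm N)\<^sup>2"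
proof -
  define Lam where "Lam = Lambda gradf lam X"
  have Lam: "Lam = A ** X + lam *\<^sub>R N"
    by (simp add: Lam_def Lambda_def rgrad_def A_def G_def N_def D_def)
  have gL: "inner gL V = inner G V - inner S (transpose X ** V)
              - 1/2 * inner (transpose X ** H V + transpose V ** G) D + mu * inner D (transpose X ** V)" for V
    using has_derivative_unique[OF gradL has_derivative_meritL[OF f gradf]]
    unfolding G_def S_def D_def by metis
  have sym_D: "transpose D = D" and sym_S: "transpose S = S" and sym_DD: "transpose (D ** D) = D ** D"
    by (simp_all add: D_def S_def symmetric_gram_minus_id transpose_msym matrix_transpose_mul)
  have skew_XAX: "transpose (transpose X ** A ** X) = - (transpose X ** A ** X)"
    by (simp add: A_def transpose_congruence_skew transpose_mskew)
  have XtN: "transpose X ** N = D ** D + D"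
    unfolding N_def D_def by (rule transpose_mult_normal_part)
  have XtLam: "transpose X ** Lam = transpose X ** A ** X + lam *\<^sub>R (D ** D + D)"
    by (simp add: Lam matrix_add_ldistrib matrix_scalar_ac scalar_matrix_assoc[symmetric] matrix_mul_assoc XtN)
  have "inner G (A ** X) = (norm A)\<^sup>2"
    by (simp add: inner_commute[of G] inner_matrix_mult_right A_def inner_mskew_self)
  moreover have "inner G (X ** M) = inner S M" if "transpose M = M" for M
    by (simp add: inner_commute[of G] inner_matrix_mult_left S_def inner_msym_symmetric that)
  ultimately have iG: "inner G Lam = (norm A)\<^sup>2 + lam * inner S D"
    and iGD: "inner G (Lam ** D) = inner G (A ** X ** D) + lam * inner S (D ** D)"
    by (simp_all add: Lam N_def inner_add_right sym_D sym_DD matrix_add_rdistrib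
        scalar_matrix_assoc[symmetric] matrix_mul_assoc[symmetric])
  have iS: "inner S (transpose X ** Lam) = lam * (inner S (D ** D) + inner S D)"
    by (simp add: XtLam inner_add_right inner_symmetric_skew[OF sym_S skew_XAX])
  have "inner D (transpose X ** Lam) = lam * inner D (transpose X ** N)"
    by (simp add: XtLam XtN inner_add_right inner_symmetric_skew[OF sym_D skew_XAX])
  also have "\<dots> = lam * (norm N)\<^sup>2"
    by (simp add: N_def inner_matrix_mult_left[symmetric] power2_norm_eq_inner)
  finally have iD: "inner D (transpose X ** Lam) = lam * (norm N)\<^sup>2" .
  have iH: "inner (transpose X ** H Lam + transpose Lam ** G) D
              = inner (H Lam) N + inner G (A ** X ** D) + lam * inner S (D ** D)"
    by (simp add: inner_add_left inner_matrix_mult_left N_def iGD[symmetric])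
  show ?thesis
    unfolding Lam_def[symmetric] gL iG iS iD iH by (simp add: algebra_simps)
qed

lemma inner_skew_mult_symmetric:
  assumes "transpose A = - A" and "transpose M = M"
  shows "inner ((A::real^'n^'n) ** X) ((X::real^'p^'n) ** M) = 0"
proof -
  have "inner (A ** X) (X ** M) = inner M (transpose X ** (A ** X))"
    by (subst inner_commute) (rule inner_matrix_mult_left)
  also have "\<dots> = inner M (transpose X ** A ** X)"
    by (simp only: matrix_mul_assoc)
  also have "\<dots> = 0"
    by (rule inner_symmetric_skew[OF assms(2) transpose_congruence_skew[OF assms(1)]])
  finally show ?thesis .
qed

lemma norm_mult_gram_le:
  fixes X :: "real^'p^'n" and A :: "real^'n^'n"
  shows "(norm (A ** X))\<^sup>2 \<le> (1 + norm (transpose X ** X - mat 1)) * (norm A)\<^sup>2"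
proof -
  define W where "W = A ** X"
  define d where "d = norm (transpose X ** X - mat 1)"
  have "(norm (W ** transpose X))\<^sup>2 = inner W (W ** (transpose X ** X - mat 1)) + (norm W)\<^sup>2"
    by (simp add: power2_norm_eq_inner inner_matrix_mult_right matrix_diff_ldistrib
        matrix_mul_assoc inner_diff_right)
  also have "inner W (W ** (transpose X ** X - mat 1)) \<le> norm W * (norm W * d)"
    unfolding d_def
    by (rule order_trans[OF norm_cauchy_schwarz mult_left_mono[OF norm_matrix_mult_le norm_ge_zero]])
  finally have WXt: "(norm (W ** transpose X))\<^sup>2 \<le> (1 + d) * (norm W)\<^sup>2"
    by (simp add: algebra_simps power2_eq_square)
  have "(norm W)\<^sup>2 = inner A (W ** transpose X)"
    by (simp add: W_def power2_norm_eq_inner inner_matrix_mult_right)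
  also have "\<dots> \<le> norm A * norm (W ** transpose X)"
    by (rule norm_cauchy_schwarz)
  finally have "((norm W)\<^sup>2)\<^sup>2 \<le> (norm A)\<^sup>2 * (norm (W ** transpose X))\<^sup>2"
    by (metis power_mono power_mult_distrib zero_le_power2)
  also have "\<dots> \<le> ((1 + d) * (norm A)\<^sup>2) * (norm W)\<^sup>2"
    using mult_left_mono[OF WXt, of "(norm A)\<^sup>2"] by (simp add: mult_ac)
  finally have key: "(norm W)\<^sup>2 * (norm W)\<^sup>2 \<le> ((1 + d) * (norm A)\<^sup>2) * (norm W)\<^sup>2"
    by (simp add: power2_eq_square)
  have "(norm W)\<^sup>2 \<le> (1 + d) * (norm A)\<^sup>2"
  proof (cases "W = 0")
    case True
    then show ?thesis by (simp add: d_def)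
  next
    case False
    then show ?thesis by (intro mult_right_le_imp_le[OF key]) simp
  qed
  then show ?thesis
    by (simp add: W_def d_def)
qed

lemma norm_normal_part_ge:
  fixes X :: "real^'p^'n"
  defines "D \<equiv> transpose X ** X - mat 1"
  shows "(1 - norm D) * (norm D)\<^sup>2 \<le> (norm (X ** D))\<^sup>2"
proof -
  have "(norm (X ** D))\<^sup>2 = inner D (D ** D) + (norm D)\<^sup>2"
    by (simp add: power2_norm_eq_inner inner_matrix_mult_left D_def transpose_mult_normal_part
        inner_add_right)
  moreover have "- inner D (D ** D) \<le> norm D * (norm D * norm D)"
    using norm_cauchy_schwarz[of "-D" "D ** D"]
      mult_left_mono[OF norm_matrix_mult_le[of D D] norm_ge_zero[of D]]
    by simp
  ultimately show ?thesis
    by (simp add: algebra_simps power2_eq_square)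
qed

lemma gram_along_direction:
  fixes X :: "real^'p^'n" and A :: "real^'n^'n" and lam t :: real
  assumes skew: "transpose A = - A"
  defines "D \<equiv> transpose X ** X - mat 1"
  defines "Lam \<equiv> A ** X + lam *\<^sub>R (X ** D)"
  shows "transpose (X - t *\<^sub>R Lam) ** (X - t *\<^sub>R Lam) - mat 1
           = D - (2 * t * lam) *\<^sub>R (D ** D + D) + t\<^sup>2 *\<^sub>R (transpose Lam ** Lam)"
proof -
  have XtN: "transpose X ** X ** D = D ** D + D"
    using transpose_mult_normal_part[of X] by (simp add: D_def matrix_mul_assoc)
  have XtLam: "transpose X ** Lam = transpose X ** A ** X + lam *\<^sub>R (D ** D + D)"
    by (simp add: Lam_def matrix_add_ldistrib matrix_scalar_ac scalar_matrix_assoc[symmetric]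
        matrix_mul_assoc XtN)
  have "transpose Lam ** X = transpose (transpose X ** Lam)"
    by (simp add: matrix_transpose_mul)
  also have "\<dots> = - (transpose X ** A ** X) + lam *\<^sub>R (D ** D + D)"
    unfolding XtLam D_def
    by (simp add: matrix_transpose_mul transpose_add transpose_scalar skew symmetric_gram_minus_id
        matrix_mult_neg_left matrix_mult_neg_right matrix_mul_assoc)
  finally have "transpose X ** Lam + transpose Lam ** X = lam *\<^sub>R (D ** D + D) + lam *\<^sub>R (D ** D + D)"
    by (simp add: XtLam)
  moreover have "transpose (X - t *\<^sub>R Lam) ** (X - t *\<^sub>R Lam)
          = transpose X ** X - t *\<^sub>R (transpose X ** Lam + transpose Lam ** X)
            + t\<^sup>2 *\<^sub>R (transpose Lam ** Lam)"
    by (simp add: transpose_diff transpose_scalar matrix_diff_ldistrib matrix_diff_rdistrib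
        matrix_scalar_ac scalar_matrix_assoc[symmetric] algebra_simps power2_eq_square)
  ultimately show ?thesis
    by (simp add: D_def scaleR_left_distrib[symmetric])
qed

lemma eventually_in_stiefel_eps_along:
  fixes X :: "real^'p^'n" and A :: "real^'n^'n"
  assumes skew: "transpose A = - A" and lam: "0 < lam" and X: "X \<in> stiefel_eps eps"
    and eps: "0 < eps" "eps < 1"
  shows "\<forall>\<^sub>F t in at_right 0.
           X - t *\<^sub>R (A ** X + lam *\<^sub>R (X ** (transpose X ** X - mat 1))) \<in> stiefel_eps eps"
proof -
  define D where "D = transpose X ** X - mat 1"
  define Lam where "Lam = A ** X + lam *\<^sub>R (X ** D)"
  define d where "d = norm D"
  define M where "M = (norm Lam)\<^sup>2"
  \<comment> \<open>The defect along the path is at most \<open>d - 2 t lam d (1 - d) + t\<^sup>2 M\<close>, which stays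
    below \<open>eps\<close> once \<open>t M < c\<close>; \<open>c > 0\<close> either because \<open>d < eps\<close> or because the
    first-order decrease \<open>2 lam d (1 - d)\<close> is positive.\<close>
  define c where "c = eps - d + 2 * lam * d * (1 - d)"
  have d: "0 \<le> d" "d \<le> eps"
    using X by (simp_all add: d_def D_def stiefel_eps_def)
  have c: "0 < c"
  proof (cases "d = eps")
    case True
    then show ?thesis using eps lam by (simp add: c_def)
  next
    case False
    moreover have "0 \<le> 2 * lam * d * (1 - d)"
      using d eps lam by simp
    ultimately show ?thesis using d unfolding c_def by linarith
  qed
  have bound: "norm (transpose (X - t *\<^sub>R Lam) ** (X - t *\<^sub>R Lam) - mat 1)
                 \<le> (1 - 2 * t * lam) * d + 2 * t * lam * d\<^sup>2 + t\<^sup>2 * M"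
    if "0 < t" "2 * t * lam \<le> 1" for t
  proof -
    have "transpose (X - t *\<^sub>R Lam) ** (X - t *\<^sub>R Lam) - mat 1
            = (1 - 2 * t * lam) *\<^sub>R D - (2 * t * lam) *\<^sub>R (D ** D) + t\<^sup>2 *\<^sub>R (transpose Lam ** Lam)"
      unfolding Lam_def D_def gram_along_direction[OF skew] by (simp add: algebra_simps)
    also have "norm \<dots> \<le> (1 - 2 * t * lam) * d + (2 * t * lam) * norm (D ** D)
                          + t\<^sup>2 * norm (transpose Lam ** Lam)"
      using that lam norm_triangle_ineq4 norm_triangle_ineq
      by (smt (verit, best) d_def mult_nonneg_nonneg norm_scaleR zero_le_power2)
    also have "\<dots> \<le> (1 - 2 * t * lam) * d + 2 * t * lam * d\<^sup>2 + t\<^sup>2 * M"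
      using that lam norm_matrix_mult_le[of D D] norm_matrix_mult_le[of "transpose Lam" Lam]
      by (intro add_mono mult_left_mono) (simp_all add: d_def M_def norm_transpose power2_eq_square)
    finally show ?thesis .
  qed
  have small: "\<forall>\<^sub>F t in at_right 0. t < b" if "0 < b" for b :: real
    by (rule order_tendstoD(2)[OF tendsto_ident_at that])
  have M1: "0 < M + 1"
    by (simp add: M_def add_nonneg_pos)
  have pos: "0 < (1::real)" "0 < 1 / (2 * lam)" "0 < c / (M + 1)"
    using lam c M1 by simp_all
  show ?thesis
    using eventually_at_right_less small[OF pos(1)] small[OF pos(2)] small[OF pos(3)]
  proof eventually_elim
    case (elim t)
    then have t: "0 < t" "2 * t * lam \<le> 1" "t \<le> 1" "t * (M + 1) < c"
      using lam M1 by (simp_all add: field_simps)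
    then have "t * M \<le> c"
      by (smt (verit) mult_left_mono)
    then have "t\<^sup>2 * M \<le> t * c"
      using t by (simp add: power2_eq_square mult.assoc mult_left_mono)
    also have "\<dots> = t * (eps - d) + 2 * t * lam * d * (1 - d)"
      by (simp add: c_def algebra_simps)
    also have "\<dots> \<le> (eps - d) + 2 * t * lam * d * (1 - d)"
      using mult_left_le_one_le[of "eps - d" t] t d by simp
    finally have "(1 - 2 * t * lam) * d + 2 * t * lam * d\<^sup>2 + t\<^sup>2 * M \<le> eps"
      by (simp add: algebra_simps power2_eq_square)
    then show ?case
      using bound[OF t(1,2)] by (simp add: stiefel_eps_def Lam_def D_def)
  qed
qed

lemma has_derivative_norm_le_lipschitz_along:
  fixes F :: "'a::real_normed_vector \<Rightarrow> 'b::real_normed_vector"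
  assumes deriv: "(F has_derivative F') (at x)" and lip: "L-lipschitz_on S F" and "x \<in> S"
    and inside: "\<forall>\<^sub>F t in at_right 0. x + t *\<^sub>R v \<in> S"
  shows "norm (F' v) \<le> L * norm v"
proof (rule Lim_norm_ubound)
  have "(F has_derivative F') (at (x + 0 *\<^sub>R v))"
    using deriv by simp
  then have "((\<lambda>t. F (x + t *\<^sub>R v)) has_derivative (\<lambda>t. F' (t *\<^sub>R v))) (at 0 within {0<..})"
    by (rule has_derivative_compose[rotated]) (auto intro!: derivative_eq_intros)
  then have "((\<lambda>t. (1 / t) *\<^sub>R (F (x + t *\<^sub>R v) - (F x + t *\<^sub>R F' v))) \<longlongrightarrow> 0) (at_right 0)"
    unfolding has_derivative_within
    by (elim conjE Lim_transform_eventually)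
      (auto simp: linear_simps has_derivative_bounded_linear[OF deriv]
        intro: eventually_mono[OF eventually_at_right_less])
  then have "((\<lambda>t. (1 / t) *\<^sub>R (F (x + t *\<^sub>R v) - (F x + t *\<^sub>R F' v)) + F' v) \<longlongrightarrow> F' v) (at_right 0)"
    using tendsto_add[OF _ tendsto_const, of _ 0 _ "F' v"] by simp
  moreover have "\<forall>\<^sub>F t in at_right 0.
      (1 / t) *\<^sub>R (F (x + t *\<^sub>R v) - (F x + t *\<^sub>R F' v)) + F' v = (1 / t) *\<^sub>R (F (x + t *\<^sub>R v) - F x)"
    using eventually_at_right_less[of 0]
    by eventually_elim (simp add: scaleR_right_diff_distrib scaleR_right_distrib)
  ultimately show "((\<lambda>t. (1 / t) *\<^sub>R (F (x + t *\<^sub>R v) - F x)) \<longlongrightarrow> F' v) (at_right 0)"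
    by (rule Lim_transform_eventually)
  show "\<forall>\<^sub>F t in at_right 0. norm ((1 / t) *\<^sub>R (F (x + t *\<^sub>R v) - F x)) \<le> L * norm v"
    using inside eventually_at_right_less[of 0]
  proof eventually_elim
    case (elim t)
    then have "norm (F (x + t *\<^sub>R v) - F x) \<le> L * (t * norm v)"
      using lipschitz_on_normD[OF lip, of "x + t *\<^sub>R v" x] \<open>x \<in> S\<close> by simp
    with elim show ?case
      by (simp add: divide_simps mult_ac)
  qed
qed simp

lemma compact_stiefel_eps: "compact (stiefel_eps eps :: (real^'p^'n) set)"
proof -
  have "continuous_on UNIV (\<lambda>X::real^'p^'n. norm (transpose X ** X - mat 1))"
    by (intro continuous_intros bounded_bilinear.continuous_on[OF bounded_bilinear_matrix_mult]
        bounded_linear.continuous_on[OF bounded_linear_transpose])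
  then have "closed (stiefel_eps eps :: (real^'p^'n) set)"
    unfolding stiefel_eps_def by (rule closed_Collect_le[OF _ continuous_on_const])
  moreover have "norm X \<le> sqrt (norm (mat 1 :: real^'p^'p) * eps + (norm (mat 1 :: real^'p^'p))\<^sup>2)"
    if "X \<in> stiefel_eps eps" for X :: "real^'p^'n"
  proof (rule real_le_rsqrt)
    have "(norm X)\<^sup>2 = inner (mat 1) (transpose X ** X)"
      using inner_matrix_mult_left[of X "mat 1" X] by (simp add: power2_norm_eq_inner)
    also have "\<dots> = inner (mat 1) (transpose X ** X - mat 1) + (norm (mat 1 :: real^'p^'p))\<^sup>2"
      by (simp add: inner_diff_right power2_norm_eq_inner)
    also have "inner (mat 1 :: real^'p^'p) (transpose X ** X - mat 1) \<le> norm (mat 1 :: real^'p^'p) * eps"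
      using that norm_cauchy_schwarz[of "mat 1 :: real^'p^'p" "transpose X ** X - mat 1"]
        mult_left_mono[of _ eps "norm (mat 1 :: real^'p^'p)"]
      by (force simp: stiefel_eps_def)
    finally show "(norm X)\<^sup>2 \<le> norm (mat 1 :: real^'p^'p) * eps + (norm (mat 1 :: real^'p^'p))\<^sup>2"
      by simp
  qed
  then have "bounded (stiefel_eps eps :: (real^'p^'n) set)"
    unfolding bounded_iff by blast
  ultimately show ?thesis
    by (simp add: compact_eq_bounded_closed)
qed

lemma norm_le_SUP_compact:
  fixes h :: "'a::topological_space \<Rightarrow> 'b::real_normed_vector"
  assumes "compact S" and "continuous_on S h" and "x \<in> S"
  shows "norm (h x) \<le> (SUP y\<in>S. norm (h y))"
proof (rule cSUP_upper[OF assms(3)])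
  have "compact ((\<lambda>y. norm (h y)) ` S)"
    by (intro compact_continuous_image continuous_on_norm assms(1,2))
  then show "bdd_above ((\<lambda>y. norm (h y)) ` S)"
    by (intro bounded_imp_bdd_above compact_imp_bounded)
qed

lemma young_ineq: "0 < c \<Longrightarrow> x * y \<le> c * x\<^sup>2 + y\<^sup>2 / (4 * c)" for c x y :: real
proof -
  assume c: "0 < c"
  have "0 \<le> (2 * c * x - y)\<^sup>2 / (4 * c)"
    using c by simp
  also have "\<dots> = c * x\<^sup>2 + y\<^sup>2 / (4 * c) - x * y"
    using c by (simp add: field_simps power2_eq_square)
  finally show ?thesis by simp
qed

lemma penalty_coefficient_bound:
  fixes eps lam L s Lh mu :: real
  assumes eps: "0 < eps" "eps < 3/4" and lam: "0 < lam" and L: "0 \<le> L" and s: "0 \<le> s"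
    and mu: "mu \<ge> 2 / (3 - 4 * eps) * (L * (1 - eps) + 3 * s + Lh\<^sup>2 * (1 + eps)\<^sup>2 / (lam * (1 - eps)))"
  defines "q \<equiv> Lh\<^sup>2 * (1 + eps) / (4 * (1 - eps))"
  shows "lam * mu / 4 \<le> lam * mu - lam * L / 2 - q - (q + 3/2 * lam * s) / (1 - eps)"
proof -
  have pos: "0 < 1 - eps" "0 < 3 - 4 * eps"
    using eps by simp_all
  have "3/4 * lam * mu \<ge> 3/4 * lam * (2 / (3 - 4 * eps) *
          (L * (1 - eps) + 3 * s + Lh\<^sup>2 * (1 + eps)\<^sup>2 / (lam * (1 - eps))))"
    by (rule mult_left_mono[OF mu]) (use lam in simp)
  also have "3/4 * lam * (2 / (3 - 4 * eps) *
          (L * (1 - eps) + 3 * s + Lh\<^sup>2 * (1 + eps)\<^sup>2 / (lam * (1 - eps))))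
        = lam * L * (3 * (1 - eps) / (2 * (3 - 4 * eps))) + lam * s * (9 / (2 * (3 - 4 * eps)))
          + Lh\<^sup>2 * (3 * (1 + eps)\<^sup>2 / (2 * (3 - 4 * eps) * (1 - eps)))"
    using pos lam by (simp add: divide_simps) (simp add: algebra_simps)
  finally have split: "lam * L * (3 * (1 - eps) / (2 * (3 - 4 * eps))) + lam * s * (9 / (2 * (3 - 4 * eps)))
          + Lh\<^sup>2 * (3 * (1 + eps)\<^sup>2 / (2 * (3 - 4 * eps) * (1 - eps))) \<le> 3/4 * lam * mu" .
  have "1/2 \<le> 3 * (1 - eps) / (2 * (3 - 4 * eps))"
    using eps by (simp add: field_simps)
  then have cL: "lam * L * (1/2) \<le> lam * L * (3 * (1 - eps) / (2 * (3 - 4 * eps)))"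
    using lam L by (intro mult_left_mono) simp_all
  have "3 / (2 * (1 - eps)) \<le> 9 / (2 * (3 - 4 * eps))"
    using eps by (simp add: field_simps)
  then have cs: "lam * s * (3 / (2 * (1 - eps))) \<le> lam * s * (9 / (2 * (3 - 4 * eps)))"
    using lam s by (intro mult_left_mono) simp_all
  have "(2 - eps) * (2 * (3 - 4 * eps)) \<le> 3 * (1 + eps) * (4 * (1 - eps))"
    using mult_nonneg_nonneg[of eps "11 - 10 * eps"] eps by (simp add: algebra_simps)
  then have "(2 - eps) / (4 * (1 - eps)) \<le> 3 * (1 + eps) / (2 * (3 - 4 * eps))"
    using pos by (simp add: divide_simps)
  then have "(2 - eps) / (4 * (1 - eps)) * ((1 + eps) / (1 - eps))
               \<le> 3 * (1 + eps) / (2 * (3 - 4 * eps)) * ((1 + eps) / (1 - eps))"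
    by (rule mult_right_mono) (use pos eps in simp)
  then have "(1 + eps) * (2 - eps) / (4 * (1 - eps)\<^sup>2) \<le> 3 * (1 + eps)\<^sup>2 / (2 * (3 - 4 * eps) * (1 - eps))"
    by (simp add: power2_eq_square mult_ac)
  then have cLh: "Lh\<^sup>2 * ((1 + eps) * (2 - eps) / (4 * (1 - eps)\<^sup>2))
                    \<le> Lh\<^sup>2 * (3 * (1 + eps)\<^sup>2 / (2 * (3 - 4 * eps) * (1 - eps)))"
    by (intro mult_left_mono) simp_all
  have "q + q / (1 - eps) = Lh\<^sup>2 * ((1 + eps) * (2 - eps) / (4 * (1 - eps)\<^sup>2))"
    using pos by (simp add: q_def divide_simps) (simp add: algebra_simps power2_eq_square)
  moreover have "(q + 3/2 * lam * s) / (1 - eps) = q / (1 - eps) + lam * s * (3 / (2 * (1 - eps)))"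
    by (simp add: add_divide_distrib)
  ultimately show ?thesis
    using split cL cs cLh by linarith
qed

lemma descent_scalar_bound:
  fixes a b al d g s0 s h L Lh lam mu eps V :: real
  assumes eps: "0 < eps" "eps < 3/4" and lam: "0 < lam" and L: "0 \<le> L" "L \<le> Lh"
    and nonneg: "0 \<le> a" "0 \<le> b" "0 \<le> d" "0 \<le> s0"
    and d: "d \<le> eps" and a: "a\<^sup>2 \<le> (1 + d) * al\<^sup>2" and b: "(1 - d) * d\<^sup>2 \<le> b\<^sup>2"
    and g: "g \<le> Lh" and s0: "s0 \<le> s" and h: "h \<le> L * (a + lam * b)"
    and mu: "mu \<ge> 2 / (3 - 4 * eps) * (L * (1 - eps) + 3 * s + Lh\<^sup>2 * (1 + eps)\<^sup>2 / (lam * (1 - eps)))"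
    and V: "al\<^sup>2 - 1/2 * g * a * d - 3/2 * lam * s0 * d\<^sup>2 - 1/2 * h * b + mu * lam * b\<^sup>2 \<le> V"
  shows "a\<^sup>2 / 2 + lam * mu / 4 * b\<^sup>2 \<le> V"
proof -
  define c where "c = (1 - eps) / (2 * (1 + eps))"
  define q where "q = Lh\<^sup>2 * (1 + eps) / (4 * (1 - eps))"
  define k where "k = (q + 3/2 * lam * s) / (1 - eps)"
  have pos: "0 < 1 - eps" "0 < 1 + eps" "0 < c"
    using eps by (simp_all add: c_def)
  have s: "0 \<le> s"
    using nonneg s0 by linarith
  have Lh2: "Lh\<^sup>2 / (4 * c) = 2 * q"
    using pos by (simp add: c_def q_def field_simps)
  have "g * a * d \<le> Lh * a * d"
    using g nonneg by (simp add: mult_right_mono)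
  also have "\<dots> \<le> c * a\<^sup>2 + (Lh * d)\<^sup>2 / (4 * c)"
    using young_ineq[OF pos(3), of a "Lh * d"] by (simp add: mult_ac)
  finally have gad: "g * a * d \<le> c * a\<^sup>2 + 2 * q * d\<^sup>2"
    by (simp add: power_mult_distrib Lh2 flip: times_divide_eq_left)
  have "h * b \<le> L * b * a + lam * L * b\<^sup>2"
    using mult_right_mono[OF h nonneg(2)] by (simp add: algebra_simps power2_eq_square)
  also have "L * b * a \<le> c * a\<^sup>2 + (L * b)\<^sup>2 / (4 * c)"
    using young_ineq[OF pos(3), of a "L * b"] by (simp add: mult_ac)
  also have "(L * b)\<^sup>2 / (4 * c) \<le> 2 * q * b\<^sup>2"
    using L pos power_mono[OF L(2) L(1)]
    by (simp add: power_mult_distrib Lh2 divide_right_mono mult_right_mono flip: Lh2 times_divide_eq_left)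
  finally have hb: "h * b \<le> c * a\<^sup>2 + 2 * q * b\<^sup>2 + lam * L * b\<^sup>2"
    by simp
  have "a\<^sup>2 \<le> (1 + eps) * al\<^sup>2"
    using a d by (smt (verit) mult_right_mono zero_le_power2)
  then have al: "a\<^sup>2 / 2 + c * a\<^sup>2 \<le> al\<^sup>2"
    using pos by (simp add: c_def field_simps)
  have "(1 - eps) * d\<^sup>2 \<le> b\<^sup>2"
    using b d by (smt (verit) mult_right_mono zero_le_power2)
  moreover have "0 \<le> q + 3/2 * lam * s"
    using pos lam s by (simp add: q_def)
  ultimately have "(q + 3/2 * lam * s) * d\<^sup>2 \<le> (q + 3/2 * lam * s) * (b\<^sup>2 / (1 - eps))"
    using pos by (intro mult_left_mono) (simp_all add: field_simps)
  then have "(q + 3/2 * lam * s) * d\<^sup>2 \<le> k * b\<^sup>2"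
    by (simp add: k_def)
  moreover have "lam * mu / 4 * b\<^sup>2 \<le> (lam * mu - lam * L / 2 - q - k) * b\<^sup>2"
    unfolding q_def k_def by (rule mult_right_mono[OF penalty_coefficient_bound[OF eps lam L(1) s mu]]) simp
  moreover have "3/2 * lam * s0 * d\<^sup>2 \<le> 3/2 * lam * s * d\<^sup>2"
    using s0 lam by (simp add: mult_right_mono)
  ultimately show ?thesis
    using V gad hb al by (simp add: algebra_simps)
qed

lemma min_rate_mult_le:
  fixes a b lam mu eps :: real
  assumes "0 < lam" "0 < eps" "0 \<le> mu"
  shows "min (1/2) (lam * mu / (4 * lam\<^sup>2 * (1 + eps))) * (a\<^sup>2 + lam\<^sup>2 * b\<^sup>2)
           \<le> a\<^sup>2 / 2 + lam * mu / 4 * b\<^sup>2"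
proof -
  define rho where "rho = min (1/2) (lam * mu / (4 * lam\<^sup>2 * (1 + eps)))"
  have "rho * lam\<^sup>2 \<le> lam * mu / (4 * lam\<^sup>2 * (1 + eps)) * lam\<^sup>2"
    by (rule mult_right_mono) (simp_all add: rho_def)
  also have "\<dots> = lam * mu / (4 * (1 + eps))"
    using assms by (simp add: divide_simps)
  also have "\<dots> \<le> lam * mu / 4"
    by (rule divide_left_mono) (use assms in simp_all)
  finally have "rho * lam\<^sup>2 * b\<^sup>2 \<le> lam * mu / 4 * b\<^sup>2"
    by (rule mult_right_mono) simp
  moreover have "rho * a\<^sup>2 \<le> 1/2 * a\<^sup>2"
    by (rule mult_right_mono) (simp_all add: rho_def)
  ultimately show ?thesis
    unfolding rho_def[symmetric] by (simp add: algebra_simps)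
qed

lemma inner_gradient_meritL_Lambda_lower:
  fixes f :: "real^'p^'n \<Rightarrow> real" and gradf :: "real^'p^'n \<Rightarrow> real^'p^'n"
  assumes f: "(f has_derivative (\<lambda>V. inner (gradf X) V)) (at X)"
    and gradf: "(gradf has_derivative H) (at X)"
    and gradL: "(meritL f gradf mu has_derivative (\<lambda>V. inner gL V)) (at X)"
    and lam: "0 \<le> lam"
  defines "D \<equiv> transpose X ** X - mat 1" and "A \<equiv> mskew (gradf X ** transpose X)"
  shows "(norm A)\<^sup>2 - 1/2 * norm (gradf X) * norm (A ** X) * norm D
           - 3/2 * lam * norm (msym (transpose X ** gradf X)) * (norm D)\<^sup>2
           - 1/2 * norm (H (Lambda gradf lam X)) * norm (X ** D) + mu * lam * (norm (X ** D))\<^sup>2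
         \<le> inner gL (Lambda gradf lam X)"
proof -
  define S where "S = msym (transpose X ** gradf X)"
  define HLam where "HLam = H (Lambda gradf lam X)"
  have "inner (gradf X) (A ** X ** D) \<le> norm (gradf X) * (norm (A ** X) * norm D)"
    by (rule order_trans[OF norm_cauchy_schwarz mult_left_mono[OF norm_matrix_mult_le norm_ge_zero]])
  then have G: "inner (gradf X) (A ** X ** D) \<le> norm (gradf X) * norm (A ** X) * norm D"
    by (simp add: mult.assoc)
  have "inner S (D ** D) \<le> norm S * (norm D * norm D)"
    by (rule order_trans[OF norm_cauchy_schwarz mult_left_mono[OF norm_matrix_mult_le norm_ge_zero]])
  then have "lam * inner S (D ** D) \<le> lam * (norm S * (norm D)\<^sup>2)"
    using lam by (simp add: mult_left_mono power2_eq_square)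
  then have S: "3/2 * lam * inner S (D ** D) \<le> 3/2 * lam * norm S * (norm D)\<^sup>2"
    by (simp add: mult.assoc)
  have H: "inner HLam (X ** D) \<le> norm HLam * norm (X ** D)"
    by (rule norm_cauchy_schwarz)
  show ?thesis
    unfolding inner_gradient_meritL_Lambda_eq[OF f gradf gradL, folded D_def A_def]
    using G S H unfolding S_def HLam_def by linarith
qed

lemma inner_gradient_meritL_Lambda_ge:
  fixes f :: "real^'p^'n \<Rightarrow> real" and gradf :: "real^'p^'n \<Rightarrow> real^'p^'n"
  assumes f: "(f has_derivative (\<lambda>V. inner (gradf X) V)) (at X)"
    and gradf: "(gradf has_derivative H) (at X)"
    and gradL: "(meritL f gradf mu has_derivative (\<lambda>V. inner gL V)) (at X)"
    and X: "X \<in> stiefel_eps eps" and lip: "L-lipschitz_on (stiefel_eps eps) gradf"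
    and eps: "0 < eps" "eps < 3/4" and lam: "0 < lam"
    and Lh: "norm (gradf X) \<le> Lh" "L \<le> Lh" and s: "norm (msym (transpose X ** gradf X)) \<le> s"
    and mu: "mu \<ge> 2 / (3 - 4 * eps) * (L * (1 - eps) + 3 * s + Lh\<^sup>2 * (1 + eps)\<^sup>2 / (lam * (1 - eps)))"
  shows "min (1/2) (lam * mu / (4 * lam\<^sup>2 * (1 + eps))) * (norm (Lambda gradf lam X))\<^sup>2
           \<le> inner gL (Lambda gradf lam X)"
proof -
  define D where "D = transpose X ** X - mat 1"
  define A where "A = mskew (gradf X ** transpose X)"
  define Lam where "Lam = Lambda gradf lam X"
  have Lam: "Lam = A ** X + lam *\<^sub>R (X ** D)"
    by (simp add: Lam_def Lambda_def rgrad_def A_def D_def)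
  have skew: "transpose A = - A"
    by (simp add: A_def transpose_mskew)
  have L: "0 \<le> L"
    by (rule lipschitz_on_nonneg[OF lip])
  have d: "0 \<le> norm D" "norm D \<le> eps"
    using X by (simp_all add: stiefel_eps_def D_def)
  have "inner (A ** X) (lam *\<^sub>R (X ** D)) = 0"
    using inner_skew_mult_symmetric[OF skew, of D X] by (simp add: D_def symmetric_gram_minus_id)
  then have norm_Lam: "(norm Lam)\<^sup>2 = (norm (A ** X))\<^sup>2 + lam\<^sup>2 * (norm (X ** D))\<^sup>2"
    unfolding Lam by (simp add: norm_add_Pythagorean orthogonal_def power_mult_distrib)
  have "\<forall>\<^sub>F t in at_right 0. X - t *\<^sub>R Lam \<in> stiefel_eps eps"
    using eventually_in_stiefel_eps_along[OF skew lam X eps(1)] eps(2) by (simp add: Lam D_def)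
  then have "\<forall>\<^sub>F t in at_right 0. X + t *\<^sub>R (- Lam) \<in> stiefel_eps eps"
    by simp
  then have "norm (H (- Lam)) \<le> L * norm (- Lam)"
    by (rule has_derivative_norm_le_lipschitz_along[OF gradf lip X])
  then have "norm (H Lam) \<le> L * norm Lam"
    using has_derivative_bounded_linear[OF gradf] by (simp add: linear_simps)
  also have "L * norm Lam \<le> L * (norm (A ** X) + lam * norm (X ** D))"
    using norm_triangle_ineq[of "A ** X" "lam *\<^sub>R (X ** D)"] lam L
    unfolding Lam by (simp add: mult_left_mono)
  finally have H: "norm (H Lam) \<le> L * (norm (A ** X) + lam * norm (X ** D))" .
  have gram: "(norm (A ** X))\<^sup>2 \<le> (1 + norm D) * (norm A)\<^sup>2"
    using norm_mult_gram_le[of A X] by (simp add: D_def)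
  have normal: "(1 - norm D) * (norm D)\<^sup>2 \<le> (norm (X ** D))\<^sup>2"
    using norm_normal_part_ge[of X] by (simp add: D_def)
  have lower: "(norm A)\<^sup>2 - 1/2 * norm (gradf X) * norm (A ** X) * norm D
                 - 3/2 * lam * norm (msym (transpose X ** gradf X)) * (norm D)\<^sup>2
                 - 1/2 * norm (H Lam) * norm (X ** D) + mu * lam * (norm (X ** D))\<^sup>2
               \<le> inner gL Lam"
    using inner_gradient_meritL_Lambda_lower[OF f gradf gradL less_imp_le[OF lam]]
    by (simp add: Lam_def D_def A_def)
  have descent: "(norm (A ** X))\<^sup>2 / 2 + lam * mu / 4 * (norm (X ** D))\<^sup>2 \<le> inner gL Lam"
    by (rule descent_scalar_bound[OF eps lam L Lh(2) _ _ d(1) _ d(2) gram normal Lh(1) s H mu lower])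
      simp_all
  have "0 \<le> 2 / (3 - 4 * eps) * (L * (1 - eps) + 3 * s + Lh\<^sup>2 * (1 + eps)\<^sup>2 / (lam * (1 - eps)))"
    using eps lam L order_trans[OF norm_ge_zero s] by simp
  then have "0 \<le> mu"
    using mu by linarith
  then show ?thesis
    unfolding Lam_def[symmetric] norm_Lam by (rule order_trans[OF min_rate_mult_le[OF lam eps(1)] descent])
qed

theorem proposition7:
  fixes f :: "real^'p^'n \<Rightarrow> real"
    and gradf :: "real^'p^'n \<Rightarrow> real^'p^'n"
    and Hf :: "real^'p^'n \<Rightarrow> ((real^'p^'n) \<Rightarrow>\<^sub>L (real^'p^'n))"
    and gradL :: "real^'p^'n \<Rightarrow> real^'p^'n"
    and lam eps L mu :: real
  assumes np: "CARD('p) \<le> CARD('n)"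
    and lam_pos: "lam > 0"
    and eps_pos: "0 < eps" and eps_lt: "eps < 3/4"
    and f_grad: "\<And>X. (f has_derivative (\<lambda>H. inner (gradf X) H)) (at X)"
    and gradf_deriv: "\<And>X. (gradf has_derivative blinfun_apply (Hf X)) (at X)"
    and Hf_cont: "continuous_on UNIV Hf"
    and L_pos: "L > 0"
    and L_lip: "\<forall>X\<in>stiefel_eps eps. \<forall>Y\<in>stiefel_eps eps.
                  norm (gradf X - gradf Y) \<le> L * norm (X - Y)"
    and mu_ge: "mu \<ge> 2 / (3 - 4 * eps) *
         (L * (1 - eps)
          + 3 * (SUP X\<in>stiefel_eps eps. norm (msym (transpose X ** gradf X)))
          + (max L (SUP X\<in>stiefel_eps eps. norm (gradf X)))\<^sup>2
              * (1 + eps)\<^sup>2 / (lam * (1 - eps)))"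
    and gradL_def: "\<And>X. (meritL f gradf mu has_derivative (\<lambda>H. inner (gradL X) H)) (at X)"
  shows "\<forall>X\<in>stiefel_eps eps.
           inner (Lambda gradf lam X) (gradL X)
             \<ge> min (1/2) ((lam * mu) / (4 * lam\<^sup>2 * (1 + eps))) * (norm (Lambda gradf lam X))\<^sup>2"
proof
  fix X :: "real^'p^'n"
  assume X: "X \<in> stiefel_eps eps"
  have cont: "continuous_on (stiefel_eps eps) gradf"
    using has_derivative_continuous[OF gradf_deriv] by (simp add: continuous_at_imp_continuous_on)
  have cont_S: "continuous_on (stiefel_eps eps) (\<lambda>Y. msym (transpose Y ** gradf Y))"
    by (intro bounded_linear.continuous_on[OF bounded_linear_msym]
        bounded_bilinear.continuous_on[OF bounded_bilinear_matrix_mult _ cont]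
        bounded_linear.continuous_on[OF bounded_linear_transpose continuous_on_id])
  note sup_bound = norm_le_SUP_compact[OF compact_stiefel_eps _ X]
  have "L-lipschitz_on (stiefel_eps eps) gradf"
    using L_lip L_pos by (intro lipschitz_onI) (simp_all add: dist_norm)
  from inner_gradient_meritL_Lambda_ge[OF f_grad gradf_deriv gradL_def X this eps_pos eps_lt lam_pos
      order_trans[OF sup_bound[OF cont] max.cobounded2] max.cobounded1 sup_bound[OF cont_S] mu_ge]
  show "inner (Lambda gradf lam X) (gradL X)
          \<ge> min (1/2) ((lam * mu) / (4 * lam\<^sup>2 * (1 + eps))) * (norm (Lambda gradf lam X))\<^sup>2"
    by (simp add: inner_commute)
qed

end
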